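(* For $\epsilon\in\mathbb{C}$, the Poisson bracket $\Psi(\Pi_0+\epsilon\Pi_\infty)$ on $V=\mathrm{Mat}_{k\times k}(\mathbb{C})\oplus\mathrm{Mat}_{k\times k}(\mathbb{C})$, where $\Pi_0=[xx^*,x^*]+[yx^*,y^*]$ and $\Pi_\infty=[yy^*,yxx^*+y^2y^*]$, is generically nondegenerate, and the corresponding symplectic form is $\mathrm{tr}\,d(Y^{-1}-\epsilon X)^{-1}\wedge d\big(X(Y^{-1}-\epsilon X)\big)$.
   Context: $Q$ is the quiver with one vertex and two loops $x,y$; $\mathbb{C}\bar Q=\mathbb{C}\langle x,y,x^*,y^*\rangle$, graded by the number of starred letters. $\mathcal{V}Q$ is the quotient of $\mathbb{C}\bar Q$ by the span of $PR-(-1)^{pr}RP$ for $P,R$ homogeneous of degrees $p,r$; $[u,v]=uv-vu$. $\mathrm{Rep}(Q,k)=V$, with the point $(X,Y)$ assigning $X$ to $x$ and $Y$ to $y$. Cotangent vectors at $(X,Y)$ are pairs $(A,B)$ paired with tangent vectors $(U,W)$ by $\mathrm{tr}(AU+BW)$. For a monomial $P=P_1a_1^*P_2\cdots P_ra_r^*P_{r+1}$ ($P_i$ monomials in $x,y$, $a_i\in\{x,y\}$), $\Psi(P)$ is the $r$-vector field on $V$ obtained by restricting to alternating tensors the form $(C^1,\dots,C^r)\mapsto\mathrm{tr}\big(P_1(X,Y)C^1_{a_1}P_2(X,Y)\cdots C^r_{a_r}P_{r+1}(X,Y)\big)$, with $C^j_x=A^j$, $C^j_y=B^j$ for $C^j=(A^j,B^j)$;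 $\Psi$ extends linearly and descends to $\mathcal{V}Q$. A generically nondegenerate Poisson bivector determines a symplectic form (its inverse) on its nondegeneracy locus. *)

theory Defs
  imports "HOL-Analysis.Analysis"
begin

text \<open>Square complex matrices of size k = CARD('n); points, tangent vectors and
  cotangent vectors of V = Mat_k(C) + Mat_k(C) are all pairs of such matrices.\<close>

type_synonym 'n cmat = "complex^'n^'n"
type_synonym 'n vpt = "'n cmat \<times> 'n cmat"

definition smat :: "complex \<Rightarrow> ('n::finite) cmat \<Rightarrow> ('n::finite) cmat" where
  "smat c A = (\<chi> i j. c * A $ i $ j)"

text \<open>Letters of the doubled quiver: x, y, x*, y*.  Words are monomials of the
  free algebra C<x,y,x*,y*>, and elements of C Qbar are formal linear combinations.\<close>

datatype letter = Lx | Ly | Lxs | Lys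

type_synonym word = "letter list"
type_synonym ncpoly = "(complex \<times> word) list"

definition gen :: "letter \<Rightarrow> ncpoly" where
  "gen l = [(1, [l])]"

definition nc_add :: "ncpoly \<Rightarrow> ncpoly \<Rightarrow> ncpoly" where
  "nc_add P R = P @ R"

definition nc_smult :: "complex \<Rightarrow> ncpoly \<Rightarrow> ncpoly" where
  "nc_smult c P = map (\<lambda>(a, w). (c * a, w)) P"

definition nc_mult :: "ncpoly \<Rightarrow> ncpoly \<Rightarrow> ncpoly" where
  "nc_mult P R = concat (map (\<lambda>(a, u). map (\<lambda>(b, v). (a * b, u @ v)) R) P)"

definition nc_comm :: "ncpoly \<Rightarrow> ncpoly \<Rightarrow> ncpoly" where
  "nc_comm P R = nc_add (nc_mult P R) (nc_smult (-1) (nc_mult R P))"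

definition starred :: "letter \<Rightarrow> bool" where
  "starred l \<longleftrightarrow> l = Lxs \<or> l = Lys"

definition wdeg :: "word \<Rightarrow> nat" where
  "wdeg w = length (filter starred w)"

text \<open>Evaluation of a monomial P1 a1* P2 ... ar* P(r+1) at the point p = (X,Y), with the
  starred letters replaced successively by the components C^j_{a_j} of the cotangent
  vectors in cs (C_x = A, C_y = B for C = (A,B)).\<close>

fun ev_word :: "('n::finite) vpt \<Rightarrow> ('n::finite) vpt list \<Rightarrow> word \<Rightarrow> ('n::finite) cmat" where
  "ev_word p cs [] = mat 1"
| "ev_word p cs (Lx # w) = fst p ** ev_word p cs w"
| "ev_word p cs (Ly # w) = snd p ** ev_word p cs w"
| "ev_word p cs (Lxs # w) = fst (hd cs) ** ev_word p (tl cs) w"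
| "ev_word p cs (Lys # w) = snd (hd cs) ** ev_word p (tl cs) w"

definition psi_tensor :: "ncpoly \<Rightarrow> ('n::finite) vpt \<Rightarrow> ('n::finite) vpt list \<Rightarrow> complex" where
  "psi_tensor P p cs =
     sum_list (map (\<lambda>(c, w). if wdeg w = length cs then c * trace (ev_word p cs w) else 0) P)"

text \<open>Psi of a degree-2 element: the bivector obtained by restricting the bilinear form to
  alternating tensors, with the convention a \<and> b = (a \<otimes> b - b \<otimes> a)/2.\<close>

definition psi_bivector :: "ncpoly \<Rightarrow> ('n::finite) vpt \<Rightarrow> ('n::finite) vpt \<Rightarrow> ('n::finite) vpt \<Rightarrow> complex" where
  "psi_bivector P p \<alpha> \<beta> = (psi_tensor P p [\<alpha>, \<beta>] - psi_tensor P p [\<beta>, \<alpha>]) / 2"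

definition vpair :: "('n::finite) vpt \<Rightarrow> ('n::finite) vpt \<Rightarrow> complex" where
  "vpair \<alpha> u = trace (fst \<alpha> ** fst u + snd \<alpha> ** snd u)"

definition nondegenerate :: "(('n::finite) vpt \<Rightarrow> ('n::finite) vpt \<Rightarrow> complex) \<Rightarrow> bool" where
  "nondegenerate \<pi> \<longleftrightarrow> (\<forall>\<alpha>. \<alpha> \<noteq> 0 \<longrightarrow> (\<exists>\<beta>. \<pi> \<alpha> \<beta> \<noteq> 0))"

text \<open>omega is the inverse of the bivector pi: omega(pi#(alpha), v) = <alpha, v>, where
  pi#(alpha) is the tangent vector u with <gamma, u> = pi(alpha, gamma) for all gamma.\<close>

definition inverse_form ::
  "(('n::finite) vpt \<Rightarrow> ('n::finite) vpt \<Rightarrow> complex) \<Rightarrow> (('n::finite) vpt \<Rightarrow> ('n::finite) vpt \<Rightarrow> complex) \<Rightarrow> bool" where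
  "inverse_form \<pi> \<omega> \<longleftrightarrow>
     (\<forall>\<alpha> u. (\<forall>\<gamma>. vpair \<gamma> u = \<pi> \<alpha> \<gamma>) \<longrightarrow> (\<forall>v. \<omega> u v = vpair \<alpha> v))"

definition dmat :: "(('n::finite) vpt \<Rightarrow> ('n::finite) cmat) \<Rightarrow> ('n::finite) vpt \<Rightarrow> ('n::finite) vpt \<Rightarrow> ('n::finite) cmat" where
  "dmat F p u = vector_derivative (\<lambda>t::real. F (p + t *\<^sub>R u)) (at 0)"

definition tr_wedge ::
  "(('n::finite) vpt \<Rightarrow> ('n::finite) cmat) \<Rightarrow> (('n::finite) vpt \<Rightarrow> ('n::finite) cmat) \<Rightarrow> ('n::finite) vpt \<Rightarrow> ('n::finite) vpt \<Rightarrow> ('n::finite) vpt \<Rightarrow> complex" where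
  "tr_wedge F G p u v = trace (dmat F p u ** dmat G p v - dmat F p v ** dmat G p u)"

definition Pi0 :: ncpoly where
  "Pi0 = nc_add (nc_comm (nc_mult (gen Lx) (gen Lxs)) (gen Lxs))
                (nc_comm (nc_mult (gen Ly) (gen Lxs)) (gen Lys))"

definition Pi_inf :: ncpoly where
  "Pi_inf = nc_comm (nc_mult (gen Ly) (gen Lys))
              (nc_add (nc_mult (gen Ly) (nc_mult (gen Lx) (gen Lxs)))
                      (nc_mult (gen Ly) (nc_mult (gen Ly) (gen Lys))))"

end

theory Submission
  imports Defs "HOL-Complex_Analysis.Complex_Singularities"
begin

text \<open>Write \<open>M = Y\<^sup>-\<^sup>1 - \<epsilon>X\<close>. Unwinding \<open>\<Psi>\<close>, the bivector is \<open>\<pi>(\<alpha>, \<beta>) = \<langle>\<beta>, \<pi>\<^sup>\<sharp>\<alpha>\<rangle>\<close> for an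
  explicit linear map \<open>\<pi>\<^sup>\<sharp>\<close>. Using \<open>d(M\<^sup>-\<^sup>1) = -M\<^sup>-\<^sup>1 dM M\<^sup>-\<^sup>1\<close> and \<open>dM = -Y\<^sup>-\<^sup>1 dY Y\<^sup>-\<^sup>1 - \<epsilon> dX\<close>,
  a direct computation shows that \<open>\<omega> = tr dM\<^sup>-\<^sup>1 \<and> d(XM)\<close> satisfies \<open>\<omega>(\<pi>\<^sup>\<sharp>\<alpha>, v) = \<langle>\<alpha>, v\<rangle>\<close>
  wherever \<open>Y\<close> and \<open>M\<close> are invertible. Hence \<open>\<pi>\<^sup>\<sharp>\<close> is injective there, so \<open>\<pi>\<close> is
  nondegenerate and \<open>\<omega>\<close> is its inverse. This locus contains the points where
  \<open>det Y \<cdot> det (1 - \<epsilon>YX) \<noteq> 0\<close>; on the complex line through any point and \<open>(0, 1)\<close> that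
  expression is an entire function which is \<open>1\<close> at \<open>(0, 1)\<close>, so its zeros are isolated and
  the locus is dense.\<close>

lemma matrix_inv_right:
  assumes "invertible (A::'a::semiring_1^'n^'m)"
  shows "A ** matrix_inv A = mat 1"
  using someI_ex[OF assms[unfolded invertible_def]] unfolding matrix_inv_def by auto

lemma matrix_inv_left:
  assumes "invertible (A::'a::semiring_1^'n^'m)"
  shows "matrix_inv A ** A = mat 1"
  using someI_ex[OF assms[unfolded invertible_def]] unfolding matrix_inv_def by auto

lemma matrix_inv_cancel:
  assumes "invertible (A::'a::semiring_1^'n^'n)"
  shows "A ** (matrix_inv A ** Z) = Z" "matrix_inv A ** (A ** Z) = Z"
  by (simp_all add: matrix_mul_assoc matrix_inv_right[OF assms] matrix_inv_left[OF assms])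

lemma matrix_add_rdistrib: "((A::'a::semiring_1^'n^'m) + B) ** C = A ** C + B ** C"
  by (vector matrix_matrix_mult_def sum.distrib[symmetric] field_simps)

lemma matrix_diff_ldistrib: "(A::'a::ring_1^'n^'m) ** (B - C) = A ** B - A ** C"
  by (vector matrix_matrix_mult_def sum_subtractf[symmetric] field_simps)

lemma matrix_diff_rdistrib: "((A::'a::ring_1^'n^'m) - B) ** C = A ** C - B ** C"
  by (vector matrix_matrix_mult_def sum_subtractf[symmetric] field_simps)

lemma matrix_neg_left: "(- (A::'a::ring_1^'n^'m)) ** C = - (A ** C)"
  by (vector matrix_matrix_mult_def sum_negf[symmetric] field_simps)

lemma matrix_neg_right: "(A::'a::ring_1^'n^'m) ** (- C) = - (A ** C)"
  by (vector matrix_matrix_mult_def sum_negf[symmetric] field_simps)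

lemma smat_mult_left: "smat c A ** B = smat c (A ** B)"
  by (simp add: smat_def matrix_matrix_mult_def vec_eq_iff sum_distrib_left mult.assoc)

lemma smat_mult_right: "A ** smat c B = smat c (A ** B)"
  by (simp add: smat_def matrix_matrix_mult_def vec_eq_iff sum_distrib_left mult_ac)

lemma smat_add: "smat c (A + B) = smat c A + smat c B"
  by (simp add: smat_def vec_eq_iff algebra_simps)

lemma smat_diff: "smat c (A - B) = smat c A - smat c B"
  by (simp add: smat_def vec_eq_iff algebra_simps)

lemma smat_neg: "smat c (- A) = - smat c A"
  by (simp add: smat_def vec_eq_iff)

lemma smat_smat: "smat c (smat d A) = smat (c * d) A"
  by (simp add: smat_def vec_eq_iff)

lemma smat_zero [simp]: "smat c 0 = 0"
  by (simp add: smat_def vec_eq_iff)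

lemma smat_scaleR: "smat c (r *\<^sub>R A) = r *\<^sub>R smat c A"
  by (simp add: smat_def vec_eq_iff scaleR_conv_of_real)

lemmas matrix_ring_simps = matrix_mul_assoc[symmetric] matrix_add_ldistrib matrix_add_rdistrib
  matrix_diff_ldistrib matrix_diff_rdistrib matrix_neg_left matrix_neg_right
  smat_mult_left smat_mult_right smat_add smat_diff smat_neg smat_smat

lemma trace_smat: "trace (smat c A) = c * trace A"
  by (simp add: smat_def trace_def sum_distrib_left)

lemma trace_neg: "trace (- (A::'a::comm_ring_1^'n^'n)) = - trace A"
  by (simp add: trace_def sum_negf)

lemma trace_cycle3: "trace ((A::'a::comm_semiring_1^'n^'n) ** (B ** C)) = trace (C ** (A ** B))"
  by (metis matrix_mul_assoc trace_mul_sym)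

lemma trace_cycle4:
  "trace ((A::'a::comm_semiring_1^'n^'n) ** (B ** (C ** D))) = trace (D ** (A ** (B ** C)))"
  by (metis matrix_mul_assoc trace_mul_sym)

lemma trace_cycle5:
  "trace ((A::'a::comm_semiring_1^'n^'n) ** (B ** (C ** (D ** E))))
     = trace (E ** (A ** (B ** (C ** D))))"
  by (metis matrix_mul_assoc trace_mul_sym)

lemma trace_cycle6:
  "trace ((A::'a::comm_semiring_1^'n^'n) ** (B ** (C ** (D ** (E ** G)))))
     = trace (G ** (A ** (B ** (C ** (D ** E)))))"
  by (metis matrix_mul_assoc trace_mul_sym)

lemma trace_mult_matrix_unit:
  "trace ((\<chi> a b. if a = j \<and> b = i then 1 else 0) ** (Z::'a::comm_semiring_1^'n^'n)) = Z $ i $ j"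
proof -
  have "trace ((\<chi> a b. if a = j \<and> b = i then 1 else 0) ** Z)
      = (\<Sum>a\<in>UNIV. \<Sum>k\<in>UNIV. (if a = j \<and> k = i then 1 else 0) * Z $ k $ a)"
    by (simp add: trace_def matrix_matrix_mult_def)
  also have "\<dots> = (\<Sum>a\<in>UNIV. if a = j then Z $ i $ a else 0)"
    by (intro sum.cong refl) (simp add: if_distrib[of "\<lambda>x. x * _"] cong: if_cong)
  finally show ?thesis by simp
qed

lemma tendsto_det:
  fixes C :: "'b \<Rightarrow> 'a::real_normed_field^'n^'n"
  assumes "(C \<longlongrightarrow> L) F"
  shows "((\<lambda>t. det (C t)) \<longlongrightarrow> det L) F"
  unfolding det_def by (intro tendsto_intros tendsto_vec_nth assms)

lemma matrix_inv_entry_cramer: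
  fixes A :: "'a::field^'n^'n"
  assumes "invertible A"
  shows "matrix_inv A $ k $ j
    = det (\<chi> a b. if b = k then (if a = j then 1 else 0) else A $ a $ b) / det A"
proof -
  have "A *v (\<chi> k. matrix_inv A $ k $ j) = (\<chi> a. if a = j then 1 else 0)"
    using matrix_inv_right[OF assms]
    by (simp add: vec_eq_iff matrix_vector_mult_def matrix_matrix_mult_def mat_def)
  then have "(\<chi> k. matrix_inv A $ k $ j) = (\<chi> k. det (\<chi> a b. if b = k
      then (\<chi> a. if a = j then 1 else 0) $ a else A $ a $ b) / det A)"
    using cramer assms invertible_det_nz by blast
  then show ?thesis by (simp add: vec_eq_iff cong: if_cong)
qed

lemma tendsto_matrix_inv:
  fixes C :: "'b \<Rightarrow> 'a::real_normed_field^'n^'n"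
  assumes C: "(C \<longlongrightarrow> L) F" and L: "invertible L"
  shows "((\<lambda>t. matrix_inv (C t)) \<longlongrightarrow> matrix_inv L) F"
    and "eventually (\<lambda>t. invertible (C t)) F"
proof -
  have "eventually (\<lambda>t. det (C t) \<noteq> 0) F"
    using tendsto_imp_eventually_ne[OF tendsto_det[OF C]] L invertible_det_nz by blast
  then show inv: "eventually (\<lambda>t. invertible (C t)) F"
    by (rule eventually_mono) (simp add: invertible_det_nz)
  show "((\<lambda>t. matrix_inv (C t)) \<longlongrightarrow> matrix_inv L) F"
  proof (intro vec_tendstoI)
    fix k j
    have "((\<lambda>t. det (\<chi> a b. if b = k then (if a = j then 1 else 0) else C t $ a $ b) / det (C t))
       \<longlongrightarrow> det (\<chi> a b. if b = k then (if a = j then 1 else 0) else L $ a $ b) / det L) F"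
      using L invertible_det_nz tendsto_vec_nth[OF tendsto_vec_nth[OF C]]
      by (intro tendsto_intros tendsto_det tendsto_vec_lambda C) (auto simp: if_distrib)
    then show "((\<lambda>t. matrix_inv (C t) $ k $ j) \<longlongrightarrow> matrix_inv L $ k $ j) F"
      unfolding matrix_inv_entry_cramer[OF L]
      by (rule Lim_transform_eventually)
        (use inv in \<open>auto elim!: eventually_mono simp: matrix_inv_entry_cramer\<close>)
  qed
qed

lemma has_vector_derivative_iff_quotient:
  fixes g :: "real \<Rightarrow> 'b::real_normed_vector"
  shows "(g has_vector_derivative g') (at x) \<longleftrightarrow>
    ((\<lambda>t. (1 / (t - x)) *\<^sub>R (g t - g x)) \<longlongrightarrow> g') (at x)"
proof -
  have quotient: "norm ((1 / norm (y - x)) *\<^sub>R (g y - (g x + (y - x) *\<^sub>R g')))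
      = norm ((1 / (y - x)) *\<^sub>R (g y - g x) - g')" if "y \<noteq> x" for y
  proof -
    have "(1 / (y - x)) *\<^sub>R (g y - g x) - g' = (1 / (y - x)) *\<^sub>R (g y - (g x + (y - x) *\<^sub>R g'))"
      using that by (simp add: scaleR_diff_right diff_diff_eq[symmetric])
    then show ?thesis by simp
  qed
  have "(g has_vector_derivative g') (at x) \<longleftrightarrow>
      ((\<lambda>y. (1 / norm (y - x)) *\<^sub>R (g y - (g x + (y - x) *\<^sub>R g'))) \<longlongrightarrow> 0) (at x)"
    by (simp add: has_vector_derivative_def has_derivative_at2 bounded_linear_scaleR_left)
  also have "\<dots> \<longleftrightarrow>
      ((\<lambda>y. norm ((1 / norm (y - x)) *\<^sub>R (g y - (g x + (y - x) *\<^sub>R g')))) \<longlongrightarrow> 0) (at x)"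
    by (rule tendsto_norm_zero_iff[symmetric])
  also have "\<dots> \<longleftrightarrow> ((\<lambda>y. norm ((1 / (y - x)) *\<^sub>R (g y - g x) - g')) \<longlongrightarrow> 0) (at x)"
    by (rule tendsto_cong, unfold eventually_at_filter, rule always_eventually)
      (blast intro: quotient)
  also have "\<dots> \<longleftrightarrow> ((\<lambda>t. (1 / (t - x)) *\<^sub>R (g t - g x)) \<longlongrightarrow> g') (at x)"
    by (simp add: tendsto_norm_zero_iff LIM_zero_iff)
  finally show ?thesis .
qed

lemma (in bounded_bilinear) has_vector_derivative_vanishing_factor:
  fixes f :: "real \<Rightarrow> 'a" and g :: "real \<Rightarrow> 'b"
  assumes f: "(f \<longlongrightarrow> f0) (at 0)" and g: "(g has_vector_derivative g') (at 0)" and "g 0 = 0"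
  shows "((\<lambda>t. prod (f t) (g t)) has_vector_derivative prod f0 g') (at 0)"
proof -
  have "((\<lambda>t. (1 / (t - 0)) *\<^sub>R (g t - g 0)) \<longlongrightarrow> g') (at 0)"
    using g has_vector_derivative_iff_quotient by blast
  from tendsto[OF f this] show ?thesis
    unfolding has_vector_derivative_iff_quotient by (simp add: \<open>g 0 = 0\<close> scaleR_right zero_right)
qed

lemma bounded_bilinear_matrix_mult:
  "bounded_bilinear ((**) :: complex^'n^'n \<Rightarrow> complex^'n^'n \<Rightarrow> complex^'n^'n)"
proof -
  have "bilinear ((**) :: complex^'n^'n \<Rightarrow> complex^'n^'n \<Rightarrow> complex^'n^'n)"
    unfolding bilinear_def
    by (auto intro!: linearI simp: matrix_add_ldistrib matrix_add_rdistrib matrix_scalar_ac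
        scalar_matrix_assoc)
  then show ?thesis by (simp add: bilinear_conv_bounded_bilinear)
qed

lemma has_vector_derivative_matrix_inv:
  fixes C :: "real \<Rightarrow> complex^'n^'n"
  assumes C: "(C has_vector_derivative C') (at 0)" and C0: "invertible (C 0)"
  shows "((\<lambda>t. matrix_inv (C t)) has_vector_derivative
           - (matrix_inv (C 0) ** (C' ** matrix_inv (C 0)))) (at 0)"
proof -
  interpret mult: bounded_bilinear "(**) :: complex^'n^'n \<Rightarrow> complex^'n^'n \<Rightarrow> complex^'n^'n"
    by (rule bounded_bilinear_matrix_mult)
  define H where "H = matrix_inv (C 0)"
  have "(C \<longlongrightarrow> C 0) (at 0)"
    using has_vector_derivative_continuous[OF C] by (simp add: continuous_at)
  note inv = tendsto_matrix_inv[OF this C0, folded H_def]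
  txt \<open>\<open>C(t)\<^sup>-\<^sup>1 = H - C(t)\<^sup>-\<^sup>1 (C(t) - C(0)) H\<close> exhibits the inverse as a continuous factor
    times a differentiable one vanishing at \<open>0\<close>.\<close>
  have resolvent: "matrix_inv (C t) = H - matrix_inv (C t) ** ((C t - C 0) ** H)"
    if "invertible (C t)" for t
    using matrix_inv_left[OF that] matrix_inv_right[OF C0]
    by (simp add: H_def matrix_diff_ldistrib matrix_diff_rdistrib matrix_mul_assoc)
  have "((\<lambda>t. (C t - C 0) ** H) has_vector_derivative (C 0 - C 0) ** 0 + (C' - 0) ** H) (at 0)"
    by (rule mult.has_vector_derivative)
      (auto intro!: derivative_intros has_vector_derivative_diff[OF C, of "\<lambda>_. C 0" 0, simplified])
  then have "((\<lambda>t. (C t - C 0) ** H) has_vector_derivative C' ** H) (at 0)"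
    by simp
  from mult.has_vector_derivative_vanishing_factor[OF inv(1) this]
  have deriv: "((\<lambda>t. H - matrix_inv (C t) ** ((C t - C 0) ** H)) has_vector_derivative
      - (H ** (C' ** H))) (at 0)"
    by (auto intro!: derivative_eq_intros)
  have "\<forall>\<^sub>F t in nhds 0. invertible (C t)"
    using inv(2) C0 by (simp add: eventually_nhds_conv_at)
  then have "\<forall>\<^sub>F t in nhds 0. t \<in> UNIV \<longrightarrow>
      matrix_inv (C t) = H - matrix_inv (C t) ** ((C t - C 0) ** H)"
    by (rule eventually_mono) (blast intro: resolvent)
  from has_vector_derivative_cong_ev[OF this resolvent[OF C0]] deriv
  show ?thesis unfolding H_def[symmetric] by simp
qed

lemma bounded_linear_smat: "bounded_linear (smat c :: complex^'n^'n \<Rightarrow> complex^'n^'n)"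
proof -
  have "linear (smat c :: complex^'n^'n \<Rightarrow> complex^'n^'n)"
    by (auto intro!: linearI simp: smat_add smat_scaleR)
  then show ?thesis by (simp add: linear_conv_bounded_linear)
qed

definition Meps :: "complex \<Rightarrow> 'n::finite vpt \<Rightarrow> 'n cmat" where
  "Meps \<epsilon> q = matrix_inv (snd q) - smat \<epsilon> (fst q)"

definition dMeps :: "complex \<Rightarrow> 'n::finite vpt \<Rightarrow> 'n vpt \<Rightarrow> 'n cmat" where
  "dMeps \<epsilon> p u = - (matrix_inv (snd p) ** (snd u ** matrix_inv (snd p))) - smat \<epsilon> (fst u)"

lemma has_vector_derivative_Meps:
  assumes "invertible (snd p)"
  shows "((\<lambda>t. Meps \<epsilon> (p + t *\<^sub>R u)) has_vector_derivative dMeps \<epsilon> p u) (at 0)"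
proof -
  have "((\<lambda>t. snd p + t *\<^sub>R snd u) has_vector_derivative snd u) (at 0)"
    and "((\<lambda>t. fst p + t *\<^sub>R fst u) has_vector_derivative fst u) (at 0)"
    by (auto intro!: derivative_eq_intros)
  from has_vector_derivative_diff[OF has_vector_derivative_matrix_inv[OF this(1)]
      bounded_linear.has_vector_derivative[OF bounded_linear_smat this(2)]]
  show ?thesis using assms by (simp add: Meps_def dMeps_def)
qed

lemma dmat_inverse_Meps:
  assumes "invertible (snd p)" and "invertible (Meps \<epsilon> p)"
  shows "dmat (\<lambda>q. matrix_inv (matrix_inv (snd q) - smat \<epsilon> (fst q))) p u
     = - (matrix_inv (Meps \<epsilon> p) ** (dMeps \<epsilon> p u ** matrix_inv (Meps \<epsilon> p)))"
proof -
  have "((\<lambda>t. matrix_inv (Meps \<epsilon> (p + t *\<^sub>R u))) has_vector_derivative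
     - (matrix_inv (Meps \<epsilon> (p + 0 *\<^sub>R u)) ** (dMeps \<epsilon> p u ** matrix_inv (Meps \<epsilon> (p + 0 *\<^sub>R u))))) (at 0)"
    using assms by (intro has_vector_derivative_matrix_inv has_vector_derivative_Meps) simp_all
  then show ?thesis unfolding dmat_def Meps_def by (simp add: vector_derivative_at)
qed

lemma dmat_mult_Meps:
  assumes "invertible (snd p)"
  shows "dmat (\<lambda>q. fst q ** (matrix_inv (snd q) - smat \<epsilon> (fst q))) p u
     = fst p ** dMeps \<epsilon> p u + fst u ** Meps \<epsilon> p"
proof -
  interpret mult: bounded_bilinear "(**) :: complex^'n^'n \<Rightarrow> complex^'n^'n \<Rightarrow> complex^'n^'n"
    by (rule bounded_bilinear_matrix_mult)
  have "((\<lambda>t. fst p + t *\<^sub>R fst u) has_vector_derivative fst u) (at 0)"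
    by (auto intro!: derivative_eq_intros)
  from mult.has_vector_derivative[OF this has_vector_derivative_Meps[OF assms]]
  show ?thesis unfolding dmat_def Meps_def by (simp add: vector_derivative_at)
qed

lemma dmat_zero_direction: "dmat F p 0 = 0"
  by (simp add: dmat_def)

lemma vpair_commute: "vpair \<alpha> u = vpair u \<alpha>"
  by (simp only: vpair_def trace_add trace_mul_sym[of "fst \<alpha>"] trace_mul_sym[of "snd \<alpha>"])

lemma vpair_diff_right: "vpair \<gamma> (u - w) = vpair \<gamma> u - vpair \<gamma> w"
  by (simp add: vpair_def matrix_diff_ldistrib trace_add trace_sub)

lemma vpair_separating:
  fixes u :: "'n::finite vpt"
  assumes "\<And>\<gamma>. vpair \<gamma> u = 0"
  shows "u = 0"
proof -
  have "fst u $ i $ j = 0" "snd u $ i $ j = 0" for i j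
    using assms[of "((\<chi> a b. if a = j \<and> b = i then 1 else 0), 0)"]
      assms[of "(0, (\<chi> a b. if a = j \<and> b = i then 1 else 0))"]
    by (simp_all add: vpair_def trace_mult_matrix_unit)
  then show ?thesis by (simp add: prod_eq_iff vec_eq_iff)
qed

lemma vpair_ext:
  fixes u w :: "'n::finite vpt"
  assumes "\<And>\<gamma>. vpair \<gamma> u = vpair \<gamma> w"
  shows "u = w"
  using vpair_separating[of "u - w"] assms by (simp add: vpair_diff_right)

text \<open>The tangent vector \<open>\<pi>\<^sup>\<sharp>\<alpha>\<close> with \<open>\<pi>(\<alpha>, \<beta>) = \<langle>\<beta>, \<pi>\<^sup>\<sharp>\<alpha>\<rangle>\<close>: expand \<open>\<Pi>\<^sub>0 + \<epsilon>\<Pi>\<^sub>\<infinity>\<close> and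
  cycle each trace so that the entries of \<open>\<beta>\<close> come first.\<close>

definition bracket_sharp :: "complex \<Rightarrow> 'n::finite vpt \<Rightarrow> 'n vpt \<Rightarrow> 'n vpt" where
  "bracket_sharp \<epsilon> p \<alpha> = (let X = fst p; Y = snd p; A = fst \<alpha>; B = snd \<alpha> in
     (X ** A - A ** X - B ** Y + smat \<epsilon> (Y ** (B ** (Y ** X))),
      Y ** A - smat \<epsilon> (Y ** (X ** (A ** Y))) + smat \<epsilon> (Y ** (B ** (Y ** Y)))
        - smat \<epsilon> (Y ** (Y ** (B ** Y)))))"

lemma psi_bivector_eq_vpair_bracket_sharp:
  "psi_bivector (nc_add Pi0 (nc_smult \<epsilon> Pi_inf)) p \<alpha> \<beta> = vpair \<beta> (bracket_sharp \<epsilon> p \<alpha>)"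
proof -
  obtain X Y where p: "p = (X, Y)" by (cases p)
  obtain A1 B1 where a: "\<alpha> = (A1, B1)" by (cases \<alpha>)
  obtain A2 B2 where b: "\<beta> = (A2, B2)" by (cases \<beta>)
  note cycles = trace_cycle3[of X A1 A2] trace_cycle3[of Y A1 B2] trace_cycle5[of Y B1 Y X A2]
    trace_cycle5[of Y B1 Y Y B2] trace_cycle5[of Y X A1 Y B2] trace_cycle5[of Y Y B1 Y B2]
    trace_cycle3[of A2 B1 Y, symmetric] trace_cycle3[of A1 X A2] trace_cycle3[of A2 A1 X, symmetric]
    trace_cycle5[of B2 Y X A1 Y, symmetric] trace_cycle5[of B2 Y Y B1 Y, symmetric]
    trace_cycle3[of B1 Y A2] trace_cycle5[of A2 Y B1 Y X, symmetric] trace_cycle5[of Y Y B2 Y B1]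
    trace_cycle5[of B1 Y Y B2 Y]
  have cycle_XA: "trace (Y ** (X ** (A2 ** (Y ** B1)))) = trace (A2 ** (Y ** (B1 ** (Y ** X))))"
    by (metis trace_cycle5)
  show ?thesis
    unfolding p a b
    by (simp add: psi_bivector_def psi_tensor_def Pi0_def Pi_inf_def nc_add_def nc_smult_def
        nc_mult_def nc_comm_def gen_def wdeg_def starred_def bracket_sharp_def vpair_def
        matrix_add_ldistrib matrix_diff_ldistrib trace_add trace_sub smat_mult_right trace_smat
        cycles cycle_XA)
qed

lemma trace_wedge_conjugated:
  fixes Mi M K V X N U :: "'a::comm_ring_1^'n^'n"
  assumes "Mi ** M = mat 1" "M ** Mi = mat 1"
  shows "trace ((Mi ** K) ** (V ** M - X ** N) - (Mi ** (N ** Mi)) ** ((U - X ** K) ** M))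
    = trace (K ** V) - trace (N ** (Mi ** (K ** X + U - X ** K)))"
proof -
  have cancel: "M ** (Mi ** Z) = Z" for Z :: "'a^'n^'n"
    using assms by (simp add: matrix_mul_assoc)
  show ?thesis
    by (simp add: matrix_ring_simps trace_add trace_sub trace_cycle4[of Mi K V M]
        trace_cycle4[of Mi K X N] trace_cycle5[of Mi N Mi U M] trace_cycle6[of Mi N Mi X K M] cancel)
qed

lemma tr_wedge_bracket_sharp:
  fixes p \<alpha> v :: "'n::finite vpt"
  assumes "invertible (snd p)" and "invertible (Meps \<epsilon> p)"
  shows "tr_wedge (\<lambda>q. matrix_inv (matrix_inv (snd q) - smat \<epsilon> (fst q)))
      (\<lambda>q. fst q ** (matrix_inv (snd q) - smat \<epsilon> (fst q))) p (bracket_sharp \<epsilon> p \<alpha>) v = vpair \<alpha> v"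
proof -
  obtain X Y where p: "p = (X, Y)" by (cases p)
  obtain A B where \<alpha>: "\<alpha> = (A, B)" by (cases \<alpha>)
  obtain V W where v: "v = (V, W)" by (cases v)
  define U where "U = fst (bracket_sharp \<epsilon> p \<alpha>)"
  define Yi where "Yi = matrix_inv Y"
  define M where "M = Meps \<epsilon> p"
  define Mi where "Mi = matrix_inv M"
  define K where "K = A - smat \<epsilon> (Y ** (B ** Y))"
  define N where "N = Yi ** (W ** Yi) + smat \<epsilon> V"
  have Yinv: "invertible Y" and Minv: "invertible M"
    using assms by (simp_all add: p M_def)
  note Y_cancel = matrix_inv_cancel[OF Yinv, folded Yi_def]
    matrix_inv_left[OF Yinv, folded Yi_def] matrix_inv_right[OF Yinv, folded Yi_def]
  note M_cancel = matrix_inv_cancel[OF Minv, folded Mi_def]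
    matrix_inv_left[OF Minv, folded Mi_def] matrix_inv_right[OF Minv, folded Mi_def]
  have M_eq: "M = Yi - smat \<epsilon> X"
    by (simp add: M_def Meps_def p Yi_def)
  have U_eq: "U = X ** A - A ** X - B ** Y + smat \<epsilon> (Y ** (B ** (Y ** X)))"
    by (simp add: U_def bracket_sharp_def p \<alpha>)
  have dM_sharp: "dMeps \<epsilon> p (bracket_sharp \<epsilon> p \<alpha>) = - (K ** M)"
    by (simp add: dMeps_def bracket_sharp_def p \<alpha> K_def M_eq Yi_def[symmetric] matrix_ring_simps
        Y_cancel algebra_simps)
  have dM_v: "dMeps \<epsilon> p v = - N"
    by (simp add: dMeps_def p v Yi_def N_def)
  have commutator: "K ** X + U - X ** K = - (M ** (Y ** (B ** Y)))"
    by (simp add: K_def U_eq M_eq matrix_ring_simps Y_cancel algebra_simps)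
  have "tr_wedge (\<lambda>q. matrix_inv (matrix_inv (snd q) - smat \<epsilon> (fst q)))
      (\<lambda>q. fst q ** (matrix_inv (snd q) - smat \<epsilon> (fst q))) p (bracket_sharp \<epsilon> p \<alpha>) v
    = trace ((Mi ** K) ** (V ** M - X ** N) - (Mi ** (N ** Mi)) ** ((U - X ** K) ** M))"
    unfolding tr_wedge_def dmat_inverse_Meps[OF assms] dmat_mult_Meps[OF assms(1)]
      dM_sharp dM_v M_def[symmetric] Mi_def[symmetric]
    by (simp add: matrix_ring_simps M_cancel p v U_def)
  also have "\<dots> = trace (K ** V) - trace (N ** (Mi ** (K ** X + U - X ** K)))"
    using M_cancel by (intro trace_wedge_conjugated)
  also have "\<dots> = trace (K ** V) + trace (N ** (Y ** (B ** Y)))"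
    unfolding commutator by (simp add: matrix_ring_simps M_cancel trace_neg)
  also have "\<dots> = vpair \<alpha> v"
    by (simp add: K_def N_def vpair_def \<alpha> v matrix_ring_simps Y_cancel trace_add trace_sub
        trace_smat trace_cycle4[of Yi W B Y] trace_cycle4[of Y B Y V] trace_mul_sym[of W B])
  finally show ?thesis .
qed

lemma nondegenerate_psi_bivector_Pi:
  fixes p :: "'n::finite vpt"
  assumes "invertible (snd p)" and "invertible (Meps \<epsilon> p)"
  shows "nondegenerate (psi_bivector (nc_add Pi0 (nc_smult \<epsilon> Pi_inf)) p)"
  unfolding nondegenerate_def
proof (intro allI impI)
  fix \<alpha> :: "'n vpt"
  assume "\<alpha> \<noteq> 0"
  show "\<exists>\<beta>. psi_bivector (nc_add Pi0 (nc_smult \<epsilon> Pi_inf)) p \<alpha> \<beta> \<noteq> 0"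
  proof (rule ccontr)
    assume "\<nexists>\<beta>. psi_bivector (nc_add Pi0 (nc_smult \<epsilon> Pi_inf)) p \<alpha> \<beta> \<noteq> 0"
    then have "bracket_sharp \<epsilon> p \<alpha> = 0"
      by (intro vpair_separating) (metis psi_bivector_eq_vpair_bracket_sharp)
    then have "vpair v \<alpha> = 0" for v
      using tr_wedge_bracket_sharp[OF assms, of \<alpha> v]
      by (simp add: tr_wedge_def dmat_zero_direction vpair_commute trace_def)
    then have "\<alpha> = 0" by (rule vpair_separating)
    with \<open>\<alpha> \<noteq> 0\<close> show False ..
  qed
qed

lemma inverse_form_psi_bivector_Pi:
  fixes p :: "'n::finite vpt"
  assumes "invertible (snd p)" and "invertible (Meps \<epsilon> p)"
  shows "inverse_form (psi_bivector (nc_add Pi0 (nc_smult \<epsilon> Pi_inf)) p)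
    (tr_wedge (\<lambda>q. matrix_inv (matrix_inv (snd q) - smat \<epsilon> (fst q)))
      (\<lambda>q. fst q ** (matrix_inv (snd q) - smat \<epsilon> (fst q))) p)"
  unfolding inverse_form_def
proof (intro allI impI)
  fix \<alpha> u v :: "'n vpt"
  assume "\<forall>\<gamma>. vpair \<gamma> u = psi_bivector (nc_add Pi0 (nc_smult \<epsilon> Pi_inf)) p \<alpha> \<gamma>"
  then have "u = bracket_sharp \<epsilon> p \<alpha>"
    by (intro vpair_ext) (metis psi_bivector_eq_vpair_bracket_sharp)
  then show "tr_wedge (\<lambda>q. matrix_inv (matrix_inv (snd q) - smat \<epsilon> (fst q)))
      (\<lambda>q. fst q ** (matrix_inv (snd q) - smat \<epsilon> (fst q))) p u v = vpair \<alpha> v"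
    using tr_wedge_bracket_sharp[OF assms] by simp
qed

lemma holomorphic_on_det:
  fixes F :: "complex \<Rightarrow> complex^'n^'n"
  assumes "\<And>i j. (\<lambda>z. F z $ i $ j) holomorphic_on S"
  shows "(\<lambda>z. det (F z)) holomorphic_on S"
  unfolding det_def by (intro holomorphic_intros assms)

lemma holomorphic_on_matrix_mult_entry:
  fixes F G :: "complex \<Rightarrow> complex^'n^'n"
  assumes "\<And>i j. (\<lambda>z. F z $ i $ j) holomorphic_on S" and "\<And>i j. (\<lambda>z. G z $ i $ j) holomorphic_on S"
  shows "(\<lambda>z. (F z ** G z) $ i $ j) holomorphic_on S"
  unfolding matrix_matrix_mult_def by (simp, intro holomorphic_intros assms)

lemma invertible_Meps_if_det_nonzero:
  fixes X Y :: "complex^'n^'n"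
  assumes "det Y * det (mat 1 - smat \<epsilon> (Y ** X)) \<noteq> 0"
  shows "invertible Y" and "invertible (Meps \<epsilon> (X, Y))"
proof -
  show Y: "invertible Y" using assms invertible_det_nz by auto
  have "invertible (matrix_inv Y)"
    using matrix_inv_left[OF Y] matrix_inv_right[OF Y] unfolding invertible_def by blast
  moreover have "Meps \<epsilon> (X, Y) = matrix_inv Y ** (mat 1 - smat \<epsilon> (Y ** X))"
    using matrix_inv_left[OF Y]
    by (simp add: Meps_def matrix_diff_ldistrib smat_mult_right matrix_mul_assoc)
  ultimately show "invertible (Meps \<epsilon> (X, Y))"
    using assms by (simp add: invertible_det_nz det_mul)
qed

lemma entire_nonzero_at_small_positive_real:
  fixes g :: "complex \<Rightarrow> complex"
  assumes "g holomorphic_on UNIV" and "g z \<noteq> 0" and "\<delta> > 0"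
  shows "\<exists>t\<in>{0<..<\<delta>}. g (of_real t) \<noteq> 0"
proof -
  have "\<forall>\<^sub>F w in at 0. g w \<noteq> 0"
    using non_zero_neighbour_alt[OF assms(1) open_UNIV connected_UNIV, of 0 z] assms(2) by simp
  then obtain r where "r > 0" and r: "\<And>w. w \<noteq> 0 \<Longrightarrow> dist w 0 < r \<Longrightarrow> g w \<noteq> 0"
    unfolding eventually_at by blast
  then show ?thesis
    using \<open>\<delta> > 0\<close> by (intro bexI[of _ "min \<delta> r / 2"] r) auto
qed

lemma dense_invertible_Meps:
  "closure {p :: 'n::finite vpt. invertible (snd p) \<and> invertible (Meps \<epsilon> p)} = UNIV"
proof -
  have "\<exists>y\<in>{p. invertible (snd p) \<and> invertible (Meps \<epsilon> p)}. dist y p0 < e"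
    if "e > 0" for p0 :: "'n vpt" and e :: real
  proof -
    obtain X0 Y0 where p0: "p0 = (X0, Y0)" by (cases p0)
    define d :: "'n vpt" where "d = (0, mat 1) - p0"
    define Xz where "Xz z = smat (1 - z) X0" for z
    define Yz where "Yz z = Y0 + smat z (mat 1 - Y0)" for z
    define g where "g z = det (Yz z) * det (mat 1 - smat \<epsilon> (Yz z ** Xz z))" for z
    have "Xz 1 = 0" "Yz 1 = mat 1"
      by (simp_all add: Xz_def Yz_def smat_def vec_eq_iff)
    have hX: "(\<lambda>z. Xz z $ i $ j) holomorphic_on UNIV"
      and hY: "(\<lambda>z. Yz z $ i $ j) holomorphic_on UNIV" for i j
      by (simp_all add: Xz_def Yz_def smat_def) (intro holomorphic_intros)+
    have "(\<lambda>z. (mat 1 - smat \<epsilon> (Yz z ** Xz z)) $ i $ j) holomorphic_on UNIV" for i j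
      unfolding smat_def by (simp, intro holomorphic_intros holomorphic_on_matrix_mult_entry hX hY)
    then have "g holomorphic_on UNIV"
      unfolding g_def by (intro holomorphic_intros holomorphic_on_det hY)
    moreover have "g 1 = 1"
      using \<open>Xz 1 = 0\<close> \<open>Yz 1 = mat 1\<close> by (simp add: g_def)
    moreover have "e / (norm d + 1) > 0"
      using \<open>e > 0\<close> by (simp add: add_nonneg_pos)
    ultimately obtain t where t: "t \<in> {0<..<e / (norm d + 1)}" "g (of_real t) \<noteq> 0"
      using entire_nonzero_at_small_positive_real[of g 1 "e / (norm d + 1)"] by auto
    have "p0 + t *\<^sub>R d = (Xz (of_real t), Yz (of_real t))"
      by (simp add: p0 d_def Xz_def Yz_def smat_def vec_eq_iff)
        (simp add: scaleR_conv_of_real algebra_simps)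
    then have "invertible (snd (p0 + t *\<^sub>R d)) \<and> invertible (Meps \<epsilon> (p0 + t *\<^sub>R d))"
      using invertible_Meps_if_det_nonzero[of "Yz (of_real t)" \<epsilon> "Xz (of_real t)"] t(2)
      by (simp add: g_def)
    moreover have "dist (p0 + t *\<^sub>R d) p0 < e"
    proof -
      have "dist (p0 + t *\<^sub>R d) p0 = t * norm d" using t by (simp add: dist_norm)
      also have "\<dots> < t * (norm d + 1)"
        using t by (simp add: algebra_simps)
      also have "\<dots> < e"
        using t by (simp add: pos_less_divide_eq add_nonneg_pos)
      finally show ?thesis .
    qed
    ultimately show ?thesis by blast
  qed
  then show ?thesis by (auto simp: closure_approachable)
qed

theorem mainTheorem11:
  fixes \<epsilon> :: complex
  shows "closure {p :: 'n::finite vpt.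
            nondegenerate (psi_bivector (nc_add Pi0 (nc_smult \<epsilon> Pi_inf)) p)
            \<and> invertible (snd p)
            \<and> invertible (matrix_inv (snd p) - smat \<epsilon> (fst p))} = UNIV
    \<and> (\<forall>p :: 'n vpt.
          nondegenerate (psi_bivector (nc_add Pi0 (nc_smult \<epsilon> Pi_inf)) p)
          \<and> invertible (snd p)
          \<and> invertible (matrix_inv (snd p) - smat \<epsilon> (fst p))
          \<longrightarrow> inverse_form (psi_bivector (nc_add Pi0 (nc_smult \<epsilon> Pi_inf)) p)
                (tr_wedge (\<lambda>q. matrix_inv (matrix_inv (snd q) - smat \<epsilon> (fst q)))
                          (\<lambda>q. fst q ** (matrix_inv (snd q) - smat \<epsilon> (fst q))) p))"
proof -
  have "{p :: 'n vpt. invertible (snd p) \<and> invertible (Meps \<epsilon> p)}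
     \<subseteq> {p. nondegenerate (psi_bivector (nc_add Pi0 (nc_smult \<epsilon> Pi_inf)) p)
            \<and> invertible (snd p) \<and> invertible (Meps \<epsilon> p)}"
    using nondegenerate_psi_bivector_Pi by blast
  from closure_mono[OF this] dense_invertible_Meps[of \<epsilon>]
  have "closure {p :: 'n vpt. nondegenerate (psi_bivector (nc_add Pi0 (nc_smult \<epsilon> Pi_inf)) p)
            \<and> invertible (snd p) \<and> invertible (Meps \<epsilon> p)} = UNIV"
    by blast
  then show ?thesis
    using inverse_form_psi_bivector_Pi by (auto simp: Meps_def)
qed

end
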